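(* Assume the rearrangement setting described in the context, and assume additionally that: - $X$ is convex in $R$; and - there is no walk in $R$ that starts in $M$ and ends in $Y$, and no walk in $R$ that starts in $Y$ and ends in $M$. If $R\in\mathfrak{T}_a$, then $S\in\mathfrak{T}_a$.
   Context: **Digraphs.** - A digraph $G$ is a pair $(V(G),A(G))$, where $V(G)$ is a finite non-empty set and $A(G)\subseteq V(G)\times V(G)$. Arcs are written $vw$. - $G^*$ is $G$ with all loops $vv$ removed. - Two vertices $u,w$ are adjacent if $uw\in A(G)$ or $wu\in A(G)$. $N_G(v)$ is the set of $w\ne v$ adjacent to $v$. - A walk is a sequence $v_0,\dots,v_I$ with $I\ge1$ and $v_{i-1}v_i\in A(G)$ for all $i$. It is closed if $v_0=v_I$. - A set $X$ is convex if every walk starting and ending in $X$ has all its vertices in $X$. - $\mathfrak{T}_a$ is the class of digraphs $G$ such that $G^*$ contains no closed walk; equivalently, every closed walk in $G$ is constant. **Rearrangement setting.** - $R=(Z,A(R))$ is a digraph. - $X,M\subseteq Z$ are disjoint. - $Y\subseteq Z$ satisfies $M\cap Y=\emptyset$ and $M\cap N_R(y)=\emptyset$ for all $y\in Y$. - $\beta:X\to Y$ is a map. - $S$ is the digraph with $V(S)=Z$ and $A(S)=A_r\cup A_d\cup A_u$, where: - $A_r=A(R)\setminus((M\times X)\cup(X\times M))$; - $A_d=\{m\beta(x): mx\in A(R)\cap(M\times X)\}$; - $A_u=\{\beta(x)m: xm\in A(R)\cap(X\times M)\}$. *)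

theory Defs
  imports Main
begin

definition digraph :: "'a set \<Rightarrow> ('a \<times> 'a) set \<Rightarrow> bool" where
  "digraph V A \<longleftrightarrow> finite V \<and> V \<noteq> {} \<and> A \<subseteq> V \<times> V"

definition noloops :: "('a \<times> 'a) set \<Rightarrow> ('a \<times> 'a) set" where
  "noloops A = A - {(v, v) | v. True}"

definition nbhd :: "('a \<times> 'a) set \<Rightarrow> 'a \<Rightarrow> 'a set" where
  "nbhd A v = {w. w \<noteq> v \<and> ((v, w) \<in> A \<or> (w, v) \<in> A)}"

definition is_walk :: "('a \<times> 'a) set \<Rightarrow> 'a list \<Rightarrow> bool" where
  "is_walk A ws \<longleftrightarrow> 2 \<le> length ws \<and> (\<forall>i. Suc i < length ws \<longrightarrow> (ws ! i, ws ! Suc i) \<in> A)"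

definition is_closed_walk :: "('a \<times> 'a) set \<Rightarrow> 'a list \<Rightarrow> bool" where
  "is_closed_walk A ws \<longleftrightarrow> is_walk A ws \<and> hd ws = last ws"

definition convex :: "('a \<times> 'a) set \<Rightarrow> 'a set \<Rightarrow> bool" where
  "convex A X \<longleftrightarrow> (\<forall>ws. is_walk A ws \<and> hd ws \<in> X \<and> last ws \<in> X \<longrightarrow> set ws \<subseteq> X)"

definition in_Ta :: "'a set \<Rightarrow> ('a \<times> 'a) set \<Rightarrow> bool" where
  "in_Ta V A \<longleftrightarrow> digraph V A \<and> \<not> (\<exists>ws. is_closed_walk (noloops A) ws)"

definition rearr_arcs :: "('a \<times> 'a) set \<Rightarrow> 'a set \<Rightarrow> 'a set \<Rightarrow> ('a \<Rightarrow> 'a) \<Rightarrow> ('a \<times> 'a) set" where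
  "rearr_arcs AR X M \<beta> =
     (AR - ((M \<times> X) \<union> (X \<times> M)))
     \<union> {(m, \<beta> x) | m x. (m, x) \<in> AR \<inter> (M \<times> X)}
     \<union> {(\<beta> x, m) | x m. (x, m) \<in> AR \<inter> (X \<times> M)}"

end

theory Submission
  imports Defs
begin

text \<open>
  Every new arc of S joins M and Y. Let D (downstream) be the set of vertices reachable in R
  from the head of an arc X \<rightarrow> M. Then D avoids Y, and D is closed under the arcs of S:
  a down-arc m \<rightarrow> \<beta> x leaving D would come from a walk X \<rightarrow> M \<rightarrow> \<dots> \<rightarrow> m \<rightarrow> x, whose
  first M-vertex lies in X by convexity, and an up-arc starts in Y. From y \<in> Y the digraph S
  only reaches R-descendants of y and vertices of D: the descendants of y avoid M, so the only
  new arcs leaving them are up-arcs, whose heads lie in D.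
  So a cycle of S through a down-arc m \<rightarrow> \<beta> x forces m \<in> D, hence \<beta> x \<in> D; and a cycle
  through an up-arc \<beta> x \<rightarrow> m runs inside D from m back to \<beta> x. Both contradict D \<inter> Y = {};
  cycles without new arcs are cycles of R.
\<close>

lemma is_walk_iff_successively:
  "is_walk A ws \<longleftrightarrow> 2 \<le> length ws \<and> successively (\<lambda>u v. (u, v) \<in> A) ws"
  by (simp add: is_walk_def successively_conv_nth)

lemma trancl_iff_walk:
  "(a, b) \<in> A\<^sup>+ \<longleftrightarrow> (\<exists>ws. is_walk A ws \<and> hd ws = a \<and> last ws = b)"
proof
  assume "(a, b) \<in> A\<^sup>+"
  then show "\<exists>ws. is_walk A ws \<and> hd ws = a \<and> last ws = b"
  proof (induction rule: trancl_induct)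
    case (base b)
    then show ?case by (intro exI[of _ "[a, b]"]) (simp add: is_walk_iff_successively)
  next
    case (step b c)
    then obtain ws where "is_walk A ws" "hd ws = a" "last ws = b" by blast
    with step.hyps(2) show ?case
      by (intro exI[of _ "ws @ [c]"]) (auto simp: is_walk_iff_successively successively_append_iff hd_append)
  qed
next
  assume "\<exists>ws. is_walk A ws \<and> hd ws = a \<and> last ws = b"
  then obtain ws where "2 \<le> length ws" "successively (\<lambda>u v. (u, v) \<in> A) ws" "hd ws = a" "last ws = b"
    by (auto simp: is_walk_iff_successively)
  then show "(a, b) \<in> A\<^sup>+"
  proof (induction ws arbitrary: a rule: induct_list012)
    case (3 u v vs)
    show ?case
    proof (cases vs)
      case Nil
      then show ?thesis using "3.prems" by auto
    next
      case (Cons w ws)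
      then have "(v, b) \<in> A\<^sup>+" using "3.prems" by (intro "3.IH"(2)) auto
      with "3.prems" show ?thesis by (auto intro: trancl_into_trancl2)
    qed
  qed auto
qed

lemma in_Ta_iff_acyclic: "in_Ta V A \<longleftrightarrow> digraph V A \<and> acyclic (noloops A)"
  unfolding in_Ta_def is_closed_walk_def acyclic_def trancl_iff_walk by metis

lemma convex_trancl:
  assumes "convex A X" "x \<in> X" "x' \<in> X" "(x, v) \<in> A\<^sup>+" "(v, x') \<in> A\<^sup>+"
  shows "v \<in> X"
proof -
  obtain ws where ws: "is_walk A ws" "hd ws = x" "last ws = v"
    using assms(4) by (auto simp: trancl_iff_walk)
  obtain vs where vs: "is_walk A (v # vs)" "last (v # vs) = x'"
  proof -
    obtain vs' where "is_walk A vs'" "hd vs' = v" "last vs' = x'"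
      using assms(5) by (auto simp: trancl_iff_walk)
    then show thesis using that[of "tl vs'"] by (cases vs') (auto simp: is_walk_def)
  qed
  have "is_walk A (ws @ vs)"
    using ws vs by (auto simp: is_walk_iff_successively successively_append_iff successively_Cons)
  moreover have "ws \<noteq> []" "vs \<noteq> []"
    using ws vs by (auto simp: is_walk_def)
  then have "hd (ws @ vs) = x" "last (ws @ vs) = x'" "v \<in> set (ws @ vs)"
    using ws vs by auto
  ultimately show ?thesis
    using assms(1-3) unfolding convex_def by (metis subsetD)
qed

lemma trancl_Un_cases:
  assumes "(a, b) \<in> (E \<union> F)\<^sup>+"
  obtains "(a, b) \<in> E\<^sup>+"
  | p q where "(p, q) \<in> F" "(a, p) \<in> (E \<union> F)\<^sup>*" "(q, b) \<in> (E \<union> F)\<^sup>*"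
  using assms
proof (induction arbitrary: thesis rule: trancl_induct)
  case (base b)
  then show ?case by blast
next
  case (step b c)
  show ?case
  proof (rule step.IH)
    assume ab: "(a, b) \<in> E\<^sup>+"
    show thesis
    proof (cases "(b, c) \<in> E")
      case True
      with ab show thesis using step.prems(1) by (meson trancl.trancl_into_trancl)
    next
      case False
      with step.hyps(2) have "(b, c) \<in> F" by blast
      moreover have "(a, b) \<in> (E \<union> F)\<^sup>*" using step.hyps(1) by (rule trancl_into_rtrancl)
      ultimately show thesis using step.prems(2) by blast
    qed
  next
    fix p q assume "(p, q) \<in> F" "(a, p) \<in> (E \<union> F)\<^sup>*" "(q, b) \<in> (E \<union> F)\<^sup>*"
    then show thesis
      using step.hyps(2) step.prems(2) by (meson rtrancl.rtrancl_into_rtrancl)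
  qed
qed

lemma acyclic_Un:
  assumes "acyclic E" and "\<And>p q. (p, q) \<in> F \<Longrightarrow> (q, p) \<notin> (E \<union> F)\<^sup>*"
  shows "acyclic (E \<union> F)"
proof (rule acyclicI, intro allI notI)
  fix v assume "(v, v) \<in> (E \<union> F)\<^sup>+"
  then show False
  proof (cases rule: trancl_Un_cases)
    case 1
    with assms(1) show False by (simp add: acyclic_def)
  next
    case (2 p q)
    then have "(q, p) \<in> (E \<union> F)\<^sup>*" by simp
    with assms(2) \<open>(p, q) \<in> F\<close> show False by blast
  qed
qed

lemma rearr_arcs_cases:
  assumes "(b, c) \<in> rearr_arcs AR X M \<beta>"
  obtains "(b, c) \<in> AR"
  | x where "b \<in> M" "x \<in> X" "(b, x) \<in> AR" "c = \<beta> x"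
  | x where "c \<in> M" "x \<in> X" "(x, c) \<in> AR" "b = \<beta> x"
  using assms unfolding rearr_arcs_def by blast

lemma rearr_arcs_subset:
  assumes "AR \<subseteq> Z \<times> Z" "\<beta> ` X \<subseteq> Z"
  shows "rearr_arcs AR X M \<beta> \<subseteq> Z \<times> Z"
  using assms unfolding rearr_arcs_def by blast

locale rearrangement =
  fixes AR :: "('a \<times> 'a) set" and X M Y :: "'a set" and \<beta> :: "'a \<Rightarrow> 'a"
  assumes disjoint_XM: "X \<inter> M = {}"
    and disjoint_MY: "M \<inter> Y = {}"
    and beta_in_Y: "x \<in> X \<Longrightarrow> \<beta> x \<in> Y"
    and convex_X: "x \<in> X \<Longrightarrow> x' \<in> X \<Longrightarrow> (x, v) \<in> AR\<^sup>+ \<Longrightarrow> (v, x') \<in> AR\<^sup>+ \<Longrightarrow> v \<in> X"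
    and no_path_M_Y: "m \<in> M \<Longrightarrow> y \<in> Y \<Longrightarrow> (m, y) \<notin> AR\<^sup>+"
    and no_path_Y_M: "y \<in> Y \<Longrightarrow> m \<in> M \<Longrightarrow> (y, m) \<notin> AR\<^sup>+"
begin

abbreviation S :: "('a \<times> 'a) set" where
  "S \<equiv> rearr_arcs AR X M \<beta>"

definition downstream :: "'a set" where
  "downstream = {v. \<exists>x\<in>X. \<exists>m\<in>M. (x, m) \<in> AR \<and> (m, v) \<in> AR\<^sup>*}"

lemma no_rtrancl_M_Y: "m \<in> M \<Longrightarrow> y \<in> Y \<Longrightarrow> (m, y) \<notin> AR\<^sup>*"
  using no_path_M_Y disjoint_MY by (auto simp: rtrancl_eq_or_trancl)

lemma no_rtrancl_Y_M: "y \<in> Y \<Longrightarrow> m \<in> M \<Longrightarrow> (y, m) \<notin> AR\<^sup>*"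
  using no_path_Y_M disjoint_MY by (auto simp: rtrancl_eq_or_trancl)

lemma downstream_disjoint_Y: "downstream \<inter> Y = {}"
  unfolding downstream_def using no_rtrancl_M_Y by blast

lemma head_in_downstream: "x \<in> X \<Longrightarrow> m \<in> M \<Longrightarrow> (x, m) \<in> AR \<Longrightarrow> m \<in> downstream"
  unfolding downstream_def by blast

lemma downstream_no_arc_into_X:
  assumes "b \<in> downstream" "x \<in> X" "(b, x) \<in> AR"
  shows False
proof -
  obtain x0 m0 where "x0 \<in> X" "m0 \<in> M" "(x0, m0) \<in> AR" "(m0, b) \<in> AR\<^sup>*"
    using assms(1) unfolding downstream_def by blast
  moreover from this assms(3) have "(m0, x) \<in> AR\<^sup>+" by (meson rtrancl_into_trancl1)
  ultimately have "m0 \<in> X" using convex_X assms(2) by blast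
  with \<open>m0 \<in> M\<close> show False using disjoint_XM by blast
qed

lemma downstream_closed: "S `` downstream \<subseteq> downstream"
proof
  fix c assume "c \<in> S `` downstream"
  then obtain b where b: "b \<in> downstream" and bc: "(b, c) \<in> S" by blast
  from bc show "c \<in> downstream"
  proof (cases rule: rearr_arcs_cases)
    case 1
    with b show ?thesis unfolding downstream_def by (blast intro: rtrancl_into_rtrancl)
  next
    case (2 x)
    with b show ?thesis using downstream_no_arc_into_X by blast
  next
    case (3 x)
    with b show ?thesis using downstream_disjoint_Y beta_in_Y by blast
  qed
qed

lemma reachable_from_Y:
  assumes "y \<in> Y" "(y, v) \<in> S\<^sup>*"
  shows "(y, v) \<in> AR\<^sup>* \<or> v \<in> downstream"
proof -
  define T where "T = AR\<^sup>* `` {y} \<union> downstream"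
  have "S `` T \<subseteq> T"
  proof
    fix c assume "c \<in> S `` T"
    then obtain b where b: "b \<in> T" and bc: "(b, c) \<in> S" by blast
    show "c \<in> T"
    proof (cases "b \<in> downstream")
      case True
      with bc show ?thesis using downstream_closed unfolding T_def by blast
    next
      case False
      with b have yb: "(y, b) \<in> AR\<^sup>*" unfolding T_def by blast
      from bc show ?thesis
      proof (cases rule: rearr_arcs_cases)
        case 1
        with yb show ?thesis unfolding T_def by (meson ImageI rtrancl.rtrancl_into_rtrancl singletonI UnI1)
      next
        case (2 x)
        with yb show ?thesis using no_rtrancl_Y_M assms(1) by blast
      next
        case (3 x)
        then show ?thesis using head_in_downstream unfolding T_def by blast
      qed
    qed
  qed
  then have "S\<^sup>* `` T = T" by (rule Image_closed_trancl)
  moreover have "v \<in> S\<^sup>* `` T" using assms(2) unfolding T_def by blast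
  ultimately show ?thesis unfolding T_def by blast
qed

lemma new_arc_not_on_cycle:
  assumes pq: "(p, q) \<in> S" "(p, q) \<notin> AR" and qp: "(q, p) \<in> S\<^sup>*"
  shows False
  using pq(1)
proof (cases rule: rearr_arcs_cases)
  case 1
  with pq(2) show False by blast
next
  case (2 x)
  then have "q \<in> Y" using beta_in_Y by blast
  with qp have "p \<in> downstream"
    using reachable_from_Y no_rtrancl_Y_M \<open>p \<in> M\<close> by blast
  with pq(1) have "q \<in> downstream" using downstream_closed by blast
  with \<open>q \<in> Y\<close> show False using downstream_disjoint_Y by blast
next
  case (3 x)
  then have "q \<in> downstream" using head_in_downstream by blast
  with qp have "p \<in> downstream" using Image_closed_trancl[OF downstream_closed] by blast
  moreover have "p \<in> Y" using 3 beta_in_Y by blast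
  ultimately show False using downstream_disjoint_Y by blast
qed

lemma acyclic_noloops_rearr_arcs:
  assumes "acyclic (noloops AR)"
  shows "acyclic (noloops S)"
proof -
  have "acyclic (noloops S \<inter> AR)"
    using assms by (rule acyclic_subset) (auto simp: noloops_def)
  then have "acyclic (noloops S \<inter> AR \<union> (noloops S - AR))"
  proof (rule acyclic_Un)
    fix p q assume pq: "(p, q) \<in> noloops S - AR"
    have "(noloops S \<inter> AR \<union> (noloops S - AR))\<^sup>* \<subseteq> S\<^sup>*"
      by (rule rtrancl_mono) (auto simp: noloops_def)
    with pq show "(q, p) \<notin> (noloops S \<inter> AR \<union> (noloops S - AR))\<^sup>*"
      using new_arc_not_on_cycle by (auto simp: noloops_def)
  qed
  then show ?thesis by (simp add: Int_Diff_Un)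
qed

end

theorem lemma7:
  fixes Z X M Y :: "'a set" and AR :: "('a \<times> 'a) set" and \<beta> :: "'a \<Rightarrow> 'a"
  assumes R: "digraph Z AR"
    and XZ: "X \<subseteq> Z" and MZ: "M \<subseteq> Z" and YZ: "Y \<subseteq> Z"
    and XM: "X \<inter> M = {}"
    and MY: "M \<inter> Y = {}"
    and MN: "\<forall>y\<in>Y. M \<inter> nbhd AR y = {}"
    and beta: "\<forall>x\<in>X. \<beta> x \<in> Y"
    and conv: "convex AR X"
    and noMY: "\<not> (\<exists>ws. is_walk AR ws \<and> hd ws \<in> M \<and> last ws \<in> Y)"
    and noYM: "\<not> (\<exists>ws. is_walk AR ws \<and> hd ws \<in> Y \<and> last ws \<in> M)"
    and Ta: "in_Ta Z AR"
  shows "in_Ta Z (rearr_arcs AR X M \<beta>)"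
proof -
  have "\<And>m y. m \<in> M \<Longrightarrow> y \<in> Y \<Longrightarrow> (m, y) \<notin> AR\<^sup>+"
    and "\<And>m y. y \<in> Y \<Longrightarrow> m \<in> M \<Longrightarrow> (y, m) \<notin> AR\<^sup>+"
    using noMY noYM by (auto simp: trancl_iff_walk)
  then interpret rearrangement AR X M Y \<beta>
    using XM MY beta convex_trancl[OF conv] by unfold_locales blast+
  have "rearr_arcs AR X M \<beta> \<subseteq> Z \<times> Z"
    using R YZ beta by (intro rearr_arcs_subset) (auto simp: digraph_def)
  then have "digraph Z (rearr_arcs AR X M \<beta>)"
    using R by (simp add: digraph_def)
  moreover have "acyclic (noloops (rearr_arcs AR X M \<beta>))"
    using Ta by (intro acyclic_noloops_rearr_arcs) (simp add: in_Ta_iff_acyclic)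
  ultimately show ?thesis by (simp add: in_Ta_iff_acyclic)
qed

end
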